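(* Let $r\ge2$ be an integer, $n\in\mathbb N$, and $f\in\mathbb W^r$. Classify the indices $j\in\mathbb Z$ as follows: $j$ is of first type if $|f'(x)|\le c_1h^{r-1}$ for all $x\in I_j$; $j$ is of second type if it is not of first type and $|f'(x)|\ge h^{r-1}$ for all $x\in I_j$; all remaining indices are of third type. Then there do not exist $2r-3$ consecutive indices $j,j+1,\dots,j+2r-4$ all of third type (i.e. at most $2r-4$ consecutive indices can be of third type).
   Context: $\mathbb W^{r}$ is the class of $2\pi$-periodic functions whose derivative of order $r-1$ exists and is absolutely continuous and with $|f^{(r)}|\le1$ a.e. on $\mathbb R$. For fixed $n$: $x_j:=-j\pi/n$, $I_j:=[x_j,x_{j-1}]$, $h:=\pi/n$. The constant is $c_1:=\frac{(2r-3)^{r-1}}{(r-1)!}+(r-1)(2r-3)^{r-2}$; it has the property that whenever $g\in\mathbb W^{r-1}$ and there are points $t_\nu\in I_\nu$, $\nu=j,\dots,j+2(r-2)$, with $|g(t_\nu)|\le h^{r-1}$, then $|g(x)|\le c_1h^{r-1}$ on $\bigcup_{\nu=j}^{j+2(r-2)}I_\nu$. *)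

theory Defs
  imports "HOL-Analysis.Analysis"
begin

definition abs_continuous_on :: "real \<Rightarrow> real \<Rightarrow> (real \<Rightarrow> real) \<Rightarrow> bool" where
  "abs_continuous_on a b g \<longleftrightarrow>
     (\<forall>\<epsilon>>0. \<exists>\<delta>>0. \<forall>(m::nat) (s::nat \<Rightarrow> real) (t::nat \<Rightarrow> real).
        (\<forall>k<m. a \<le> s k \<and> s k \<le> t k \<and> t k \<le> b) \<and>
        (\<forall>k<m. \<forall>l<m. k \<noteq> l \<longrightarrow> t k \<le> s l \<or> t l \<le> s k) \<and>
        (\<Sum>k<m. t k - s k) < \<delta>
        \<longrightarrow> (\<Sum>k<m. \<bar>g (t k) - g (s k)\<bar>) < \<epsilon>)"

definition W :: "nat \<Rightarrow> (real \<Rightarrow> real) \<Rightarrow> bool" where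
  "W r f \<longleftrightarrow>
     (\<forall>x. f (x + 2 * pi) = f x) \<and>
     (\<forall>k < r - 1. \<forall>x. (deriv ^^ k) f differentiable (at x)) \<and>
     (\<forall>a b. abs_continuous_on a b ((deriv ^^ (r - 1)) f)) \<and>
     (AE x in lborel. \<exists>D. ((deriv ^^ (r - 1)) f has_real_derivative D) (at x) \<and> \<bar>D\<bar> \<le> 1)"

definition c1 :: "nat \<Rightarrow> real" where
  "c1 r = real ((2*r-3)^(r-1)) / fact (r-1) + real (r-1) * real ((2*r-3)^(r-2))"

definition hstep :: "nat \<Rightarrow> real" where
  "hstep n = pi / real n"

definition xpt :: "nat \<Rightarrow> int \<Rightarrow> real" where
  "xpt n j = - real_of_int j * pi / real n"

definition Ij :: "nat \<Rightarrow> int \<Rightarrow> real set" where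
  "Ij n j = {xpt n j .. xpt n (j - 1)}"

definition first_type :: "nat \<Rightarrow> nat \<Rightarrow> (real \<Rightarrow> real) \<Rightarrow> int \<Rightarrow> bool" where
  "first_type r n f j \<longleftrightarrow> (\<forall>x\<in>Ij n j. \<bar>deriv f x\<bar> \<le> c1 r * hstep n ^ (r - 1))"

definition second_type :: "nat \<Rightarrow> nat \<Rightarrow> (real \<Rightarrow> real) \<Rightarrow> int \<Rightarrow> bool" where
  "second_type r n f j \<longleftrightarrow> \<not> first_type r n f j \<and> (\<forall>x\<in>Ij n j. \<bar>deriv f x\<bar> \<ge> hstep n ^ (r - 1))"

definition third_type :: "nat \<Rightarrow> nat \<Rightarrow> (real \<Rightarrow> real) \<Rightarrow> int \<Rightarrow> bool" where
  "third_type r n f j \<longleftrightarrow> \<not> first_type r n f j \<and> \<not> second_type r n f j"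

end

theory Submission
  imports Defs
begin

text \<open>If \<open>j, \<dots>, j + 2r - 4\<close> were all of third type, \<open>g = f'\<close> would satisfy
  \<open>|g| < h^(r-1)\<close> at some point of each of these intervals and \<open>|g| > c1 h^(r-1)\<close> somewhere
  in \<open>I_j\<close>. The points chosen in every other interval give \<open>r - 1\<close> interpolation nodes, pairwise
  at least \<open>h\<close> apart and within \<open>(2r - 3)h\<close> of every point of the union. The Lagrange interpolant
  of \<open>g\<close> at these nodes is bounded by \<open>(r - 1)(2r - 3)^(r-2) h^(r-1)\<close>, and by repeated use of
  Rolle's theorem the interpolation error is bounded by \<open>(2r - 3)^(r-1) h^(r-1) / (r - 1)!\<close>, because
  \<open>f^(r-1)\<close> is 1-Lipschitz. The latter holds since \<open>f^(r-1)\<close> is absolutely continuous with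
  derivative bounded by 1 almost everywhere: on a fine tagged division, the intervals with tags in the
  null set have small total length, and on the others the derivative controls the increments.
  Hence \<open>|g| \<le> c1 h^(r-1)\<close> on \<open>I_j\<close>, a contradiction.\<close>

section \<open>Absolutely continuous functions with bounded derivative\<close>

lemma abs_continuous_on_uminus:
  "abs_continuous_on a b G \<Longrightarrow> abs_continuous_on a b (\<lambda>x. - G x)"
  unfolding abs_continuous_on_def by (simp add: abs_minus_commute)

lemma tagged_division_of_real_interval:
  fixes D :: "(real \<times> real set) set"
  assumes "D tagged_division_of {a..b}" and "(x, K) \<in> D"
  obtains u v where "K = {u..v}" "u \<le> x" "x \<le> v" "a \<le> u" "v \<le> b"
proof -
  obtain u v where K: "K = cbox u v" using tagged_division_ofD(4)[OF assms] by blast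
  have "x \<in> K" "K \<subseteq> {a..b}" using tagged_division_ofD(2,3)[OF assms] by auto
  then show ?thesis using K that by auto
qed

lemma tagged_division_sum_nondegenerate:
  fixes D :: "(real \<times> real set) set" and F :: "real set \<Rightarrow> real"
  assumes D: "D tagged_division_of {a..b}" and D1: "D1 \<subseteq> D" and F: "\<And>u. F {u..u} = 0"
  shows "(\<Sum>(x,K)\<in>D1. F K) = (\<Sum>(x,K)\<in>{p \<in> D1. measure lborel (snd p) > 0}. F K)"
proof (rule sum.mono_neutral_right)
  show "finite D1" using D D1 finite_subset by blast
  show "\<forall>p\<in>D1 - {p \<in> D1. measure lborel (snd p) > 0}. (case p of (x, K) \<Rightarrow> F K) = 0"
  proof
    fix p assume p: "p \<in> D1 - {p \<in> D1. measure lborel (snd p) > 0}"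
    obtain x K where xK: "p = (x, K)" by fastforce
    have "(x, K) \<in> D" using p xK D1 by auto
    then obtain u v where K: "K = {u..v}" "u \<le> v"
      by (rule tagged_division_of_real_interval[OF D]) simp
    then have "u = v" using p xK by auto
    then show "(case p of (x, K) \<Rightarrow> F K) = 0" using K xK F by simp
  qed
qed auto

lemma tagged_division_intervals_nonoverlapping:
  fixes D :: "(real \<times> real set) set"
  assumes D: "D tagged_division_of S"
    and "(x, {s..t}) \<in> D" "(x', {s'..t'}) \<in> D" "(x, {s..t}) \<noteq> (x', {s'..t'})" "s < t" "s' < t'"
  shows "t \<le> s' \<or> t' \<le> s"
proof (rule ccontr)
  assume "\<not> (t \<le> s' \<or> t' \<le> s)"
  then have "(max s s' + min t t') / 2 \<in> {s<..<t} \<inter> {s'<..<t'}"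
    using assms(5,6) by (auto simp: max_def min_def)
  moreover have "interior {s..t} \<inter> interior {s'..t'} = {}"
    using tagged_division_ofD(5)[OF D assms(2,3,4)] .
  ultimately show False by (auto simp: max_def min_def split: if_splits)
qed

lemma tagged_division_enumerate:
  fixes D :: "(real \<times> real set) set"
  assumes D: "D tagged_division_of {a..b}" and D2: "D2 \<subseteq> D"
    and pos: "\<And>p. p \<in> D2 \<Longrightarrow> measure lborel (snd p) > 0"
  obtains m :: nat and s t :: "nat \<Rightarrow> real" where
    "\<forall>k<m. a \<le> s k \<and> s k < t k \<and> t k \<le> b"
    "\<forall>k<m. \<forall>l<m. k \<noteq> l \<longrightarrow> t k \<le> s l \<or> t l \<le> s k"
    "\<And>F :: real set \<Rightarrow> real. (\<Sum>(x,K)\<in>D2. F K) = (\<Sum>k<m. F {s k..t k})"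
proof -
  have "finite D2" using D D2 finite_subset by blast
  then obtain \<nu> where \<nu>: "bij_betw \<nu> {..<card D2} D2"
    using ex_bij_betw_nat_finite lessThan_atLeast0 by metis
  define m where "m = card D2"
  define s where "s k = Inf (snd (\<nu> k))" for k
  define t where "t k = Sup (snd (\<nu> k))" for k
  have \<nu>D: "\<nu> k \<in> D" "measure lborel (snd (\<nu> k)) > 0" if "k < m" for k
  proof -
    have "\<nu> k \<in> D2" using \<nu> that by (auto simp: m_def dest: bij_betwE)
    then show "\<nu> k \<in> D" "measure lborel (snd (\<nu> k)) > 0" using D2 pos by auto
  qed
  have st: "snd (\<nu> k) = {s k..t k} \<and> a \<le> s k \<and> s k < t k \<and> t k \<le> b" if k: "k < m" for k
  proof -
    obtain x K where xK: "\<nu> k = (x, K)" by fastforce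
    obtain u v where "K = {u..v}" "u \<le> v" "a \<le> u" "v \<le> b"
      using tagged_division_of_real_interval[OF D] \<nu>D(1)[OF k] xK by (metis order_trans)
    with \<nu>D(2)[OF k] xK show ?thesis by (auto simp: s_def t_def)
  qed
  have "t k \<le> s l \<or> t l \<le> s k" if "k < m" "l < m" "k \<noteq> l" for k l
  proof -
    have "\<nu> k \<noteq> \<nu> l" using \<nu> that by (metis bij_betw_iff_bijections lessThan_iff m_def)
    then show ?thesis
      using tagged_division_intervals_nonoverlapping[OF D, of "fst (\<nu> k)" "s k" "t k" "fst (\<nu> l)" "s l" "t l"]
        \<nu>D(1) st that by (metis prod.collapse)
  qed
  moreover have "(\<Sum>(x,K)\<in>D2. F K) = (\<Sum>k<m. F {s k..t k})" for F :: "real set \<Rightarrow> real"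
  proof -
    have "(\<Sum>(x,K)\<in>D2. F K) = (\<Sum>k<m. (\<lambda>(x,K). F K) (\<nu> k))"
      using sum.reindex_bij_betw[OF \<nu>, of "\<lambda>(x,K). F K"] m_def by simp
    also have "\<dots> = (\<Sum>k<m. F {s k..t k})"
      by (rule sum.cong) (use st in \<open>auto simp: case_prod_beta\<close>)
    finally show ?thesis .
  qed
  ultimately show ?thesis using st by (intro that[of m s t]) auto
qed

lemma tagged_division_interval_family:
  fixes D :: "(real \<times> real set) set"
  assumes D: "D tagged_division_of {a..b}" and D1: "D1 \<subseteq> D"
  obtains m :: nat and s t :: "nat \<Rightarrow> real" where
    "\<forall>k<m. a \<le> s k \<and> s k \<le> t k \<and> t k \<le> b"
    "\<forall>k<m. \<forall>l<m. k \<noteq> l \<longrightarrow> t k \<le> s l \<or> t l \<le> s k"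
    "(\<Sum>k<m. t k - s k) = (\<Sum>(x,K)\<in>D1. measure lborel K)"
    "\<And>G :: real \<Rightarrow> real. (\<Sum>(x,K)\<in>D1. G (Sup K) - G (Inf K)) = (\<Sum>k<m. G (t k) - G (s k))"
proof -
  \<comment> \<open>Degenerate intervals contribute nothing but could violate the non-overlap condition.\<close>
  define D2 where "D2 = {p \<in> D1. measure lborel (snd p) > 0}"
  show ?thesis
  proof (rule tagged_division_enumerate[OF D, of D2])
    show "D2 \<subseteq> D" "\<And>p. p \<in> D2 \<Longrightarrow> measure lborel (snd p) > 0" using D1 by (auto simp: D2_def)
    fix m :: nat and s t :: "nat \<Rightarrow> real"
    assume st: "\<forall>k<m. a \<le> s k \<and> s k < t k \<and> t k \<le> b"
      "\<forall>k<m. \<forall>l<m. k \<noteq> l \<longrightarrow> t k \<le> s l \<or> t l \<le> s k"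
      and sums: "\<And>F :: real set \<Rightarrow> real. (\<Sum>(x,K)\<in>D2. F K) = (\<Sum>k<m. F {s k..t k})"
    show ?thesis
    proof (rule that[of m s t])
      show "\<forall>k<m. a \<le> s k \<and> s k \<le> t k \<and> t k \<le> b" using st(1) by force
      show "\<forall>k<m. \<forall>l<m. k \<noteq> l \<longrightarrow> t k \<le> s l \<or> t l \<le> s k" using st(2) .
      have "(\<Sum>(x,K)\<in>D1. measure lborel K) = (\<Sum>(x,K)\<in>D2. measure lborel K)"
        unfolding D2_def by (rule tagged_division_sum_nondegenerate[OF D D1]) simp
      also have "\<dots> = (\<Sum>k<m. measure lborel {s k..t k})" by (rule sums)
      also have "\<dots> = (\<Sum>k<m. t k - s k)"
        using st(1) by (intro sum.cong refl) (simp add: content_real less_imp_le)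
      finally show "(\<Sum>k<m. t k - s k) = (\<Sum>(x,K)\<in>D1. measure lborel K)" ..
      fix G :: "real \<Rightarrow> real"
      have "(\<Sum>(x,K)\<in>D1. G (Sup K) - G (Inf K)) = (\<Sum>(x,K)\<in>D2. G (Sup K) - G (Inf K))"
        unfolding D2_def by (rule tagged_division_sum_nondegenerate[OF D D1]) simp
      also have "\<dots> = (\<Sum>k<m. G (Sup {s k..t k}) - G (Inf {s k..t k}))"
        by (rule sums)
      also have "\<dots> = (\<Sum>k<m. G (t k) - G (s k))"
        using st(1) by (intro sum.cong refl) (simp add: less_imp_le)
      finally show "(\<Sum>(x,K)\<in>D1. G (Sup K) - G (Inf K)) = (\<Sum>k<m. G (t k) - G (s k))" .
    qed
  qed
qed

lemma abs_continuous_on_small_increment: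
  assumes ac: "abs_continuous_on a b G" and e: "e > 0"
  obtains \<delta> where "\<delta> > 0"
    "\<And>D D1. D tagged_division_of {a..b} \<Longrightarrow> D1 \<subseteq> D \<Longrightarrow> (\<Sum>(x,K)\<in>D1. measure lborel K) < \<delta> \<Longrightarrow>
      (\<Sum>(x,K)\<in>D1. G (Sup K) - G (Inf K)) < e"
proof -
  obtain \<delta> where \<delta>: "\<delta> > 0" and small: "\<forall>(m::nat) (s::nat \<Rightarrow> real) (t::nat \<Rightarrow> real).
        (\<forall>k<m. a \<le> s k \<and> s k \<le> t k \<and> t k \<le> b) \<and>
        (\<forall>k<m. \<forall>l<m. k \<noteq> l \<longrightarrow> t k \<le> s l \<or> t l \<le> s k) \<and>
        (\<Sum>k<m. t k - s k) < \<delta>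
        \<longrightarrow> (\<Sum>k<m. \<bar>G (t k) - G (s k)\<bar>) < e"
    using ac e unfolding abs_continuous_on_def by blast
  show ?thesis
  proof (rule that[OF \<delta>])
    fix D D1 assume D: "D tagged_division_of {a..b}" and D1: "D1 \<subseteq> D"
      and content: "(\<Sum>(x,K)\<in>D1. measure lborel K) < \<delta>"
    show "(\<Sum>(x,K)\<in>D1. G (Sup K) - G (Inf K)) < e"
    proof (rule tagged_division_interval_family[OF D D1])
      fix m :: nat and s t :: "nat \<Rightarrow> real"
      assume family: "\<forall>k<m. a \<le> s k \<and> s k \<le> t k \<and> t k \<le> b"
        "\<forall>k<m. \<forall>l<m. k \<noteq> l \<longrightarrow> t k \<le> s l \<or> t l \<le> s k"
        "(\<Sum>k<m. t k - s k) = (\<Sum>(x,K)\<in>D1. measure lborel K)"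
        and increments: "\<And>G :: real \<Rightarrow> real.
          (\<Sum>(x,K)\<in>D1. G (Sup K) - G (Inf K)) = (\<Sum>k<m. G (t k) - G (s k))"
      have "(\<Sum>k<m. G (t k) - G (s k)) \<le> (\<Sum>k<m. \<bar>G (t k) - G (s k)\<bar>)"
        by (rule sum_mono) simp
      also have "\<dots> < e" using family content by (intro small[rule_format] conjI) simp_all
      finally show ?thesis unfolding increments .
    qed
  qed
qed

lemma has_real_derivative_increment_le:
  fixes G :: "real \<Rightarrow> real"
  assumes "(G has_real_derivative D) (at x)" and "D \<le> B" and "e > 0"
  obtains d where "d > 0"
    "\<And>u v. u \<le> x \<Longrightarrow> x \<le> v \<Longrightarrow> {u..v} \<subseteq> ball x d \<Longrightarrow> G v - G u \<le> (B + e) * (v - u)"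
proof -
  have "(G has_derivative (*) D) (at x)" using assms(1) by (simp add: has_field_derivative_def)
  then obtain d where d: "d > 0"
    and approx: "\<And>y. norm (y - x) < d \<Longrightarrow> norm (G y - G x - D * (y - x)) \<le> e * norm (y - x)"
    unfolding has_derivative_at_alt using assms(3) by blast
  show ?thesis
  proof (rule that[OF d])
    fix u v assume uv: "u \<le> x" "x \<le> v" "{u..v} \<subseteq> ball x d"
    then have "u \<in> {u..v}" "v \<in> {u..v}" by auto
    then have "u \<in> ball x d" "v \<in> ball x d" using uv(3) by blast+
    then have "\<bar>G v - G x - D * (v - x)\<bar> \<le> e * (v - x)" "\<bar>G u - G x - D * (u - x)\<bar> \<le> e * (x - u)"
      using approx[of v] approx[of u] uv by (auto simp: dist_real_def abs_minus_commute)
    moreover have "D * (v - u) \<le> B * (v - u)" using assms(2) uv by (intro mult_right_mono) auto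
    ultimately show "G v - G u \<le> (B + e) * (v - u)" by (auto simp: algebra_simps abs_le_iff)
  qed
qed

lemma derivative_bound_gauge:
  fixes G :: "real \<Rightarrow> real"
  assumes "\<And>x. x \<notin> N \<Longrightarrow> \<exists>D. (G has_real_derivative D) (at x) \<and> D \<le> B" and "e > 0"
  obtains d where "\<And>x. d x > 0"
    "\<And>x u v. x \<notin> N \<Longrightarrow> u \<le> x \<Longrightarrow> x \<le> v \<Longrightarrow> {u..v} \<subseteq> ball x (d x) \<Longrightarrow>
      G v - G u \<le> (B + e) * (v - u)"
proof -
  have "\<exists>d>0. x \<notin> N \<longrightarrow> (\<forall>u v. u \<le> x \<longrightarrow> x \<le> v \<longrightarrow> {u..v} \<subseteq> ball x d \<longrightarrow>
      G v - G u \<le> (B + e) * (v - u))" for x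
  proof (cases "x \<in> N")
    case False
    then obtain D where "(G has_real_derivative D) (at x)" "D \<le> B" using assms(1) by blast
    from has_real_derivative_increment_le[OF this assms(2)] show ?thesis by metis
  qed (auto intro: exI[of _ 1])
  then show ?thesis using that by metis
qed

lemma tagged_division_increment_sum_le:
  fixes G :: "real \<Rightarrow> real"
  assumes D: "D tagged_division_of {a..b}" and ab: "a \<le> b" and E: "E \<subseteq> D" and C: "C \<ge> 0"
    and incr: "\<And>x u v. (x, {u..v}) \<in> E \<Longrightarrow> u \<le> x \<Longrightarrow> x \<le> v \<Longrightarrow> G v - G u \<le> C * (v - u)"
  shows "(\<Sum>(x,K)\<in>E. G (Sup K) - G (Inf K)) \<le> C * (b - a)"
proof -
  have finD: "finite D" using D by blast
  have "(\<Sum>(x,K)\<in>E. G (Sup K) - G (Inf K)) \<le> (\<Sum>(x,K)\<in>E. C * measure lborel K)"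
  proof (rule sum_mono)
    fix p assume p: "p \<in> E"
    obtain x K where xK: "p = (x, K)" by fastforce
    obtain u v where K: "K = {u..v}" "u \<le> x" "x \<le> v"
      using tagged_division_of_real_interval[OF D] p xK E by blast
    then show "(case p of (x, K) \<Rightarrow> G (Sup K) - G (Inf K)) \<le> (case p of (x, K) \<Rightarrow> C * measure lborel K)"
      using incr[of x u v] p xK by (simp add: content_real)
  qed
  also have "\<dots> = C * (\<Sum>(x,K)\<in>E. measure lborel K)"
    by (simp add: sum_distrib_left case_prod_beta)
  also have "\<dots> \<le> C * (\<Sum>(x,K)\<in>D. measure lborel K)"
    using C E finD by (intro mult_left_mono sum_mono2) auto
  also have "(\<Sum>(x,K)\<in>D. measure lborel K) = b - a"
    using additive_content_tagged_division[of D a b] D ab by (simp add: content_real)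
  finally show ?thesis .
qed

lemma negligible_tags_small_content:
  fixes N :: "real set"
  assumes "negligible N" and "\<delta> > 0"
  obtains \<gamma> where "gauge \<gamma>"
    "\<And>D. D tagged_division_of {a..b} \<Longrightarrow> \<gamma> fine D \<Longrightarrow> (\<Sum>(x,K)\<in>{p\<in>D. fst p \<in> N}. measure lborel K) < \<delta>"
proof -
  have "(indicator N has_integral (0::real)) {a..b}"
    using assms(1) box_real(2)[of a b] unfolding negligible_def by metis
  then obtain \<gamma> where \<gamma>: "gauge \<gamma>" and sums: "\<And>D. D tagged_division_of {a..b} \<Longrightarrow> \<gamma> fine D \<Longrightarrow>
      norm ((\<Sum>(x,K)\<in>D. measure lborel K *\<^sub>R indicator N x) - (0::real)) < \<delta>"
    unfolding has_integral_real using assms(2) by meson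
  show ?thesis
  proof (rule that[OF \<gamma>])
    fix D assume D: "D tagged_division_of {a..b}" and fine: "\<gamma> fine D"
    have "(\<Sum>(x,K)\<in>D. measure lborel K *\<^sub>R (indicator N x :: real))
        = (\<Sum>(x,K)\<in>{p\<in>D. fst p \<in> N}. measure lborel K *\<^sub>R (indicator N x :: real))"
      using D by (intro sum.mono_neutral_right) auto
    also have "\<dots> = (\<Sum>(x,K)\<in>{p\<in>D. fst p \<in> N}. measure lborel K)"
      by (rule sum.cong) auto
    finally show "(\<Sum>(x,K)\<in>{p\<in>D. fst p \<in> N}. measure lborel K) < \<delta>"
      using sums[OF D fine] by simp
  qed
qed

lemma abs_continuous_increment_le_approx:
  fixes G :: "real \<Rightarrow> real" and N :: "real set"
  assumes ac: "abs_continuous_on a b G" and N: "negligible N"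
    and der: "\<And>x. x \<notin> N \<Longrightarrow> \<exists>D. (G has_real_derivative D) (at x) \<and> D \<le> B"
    and B: "0 \<le> B" and ab: "a \<le> b" and e: "e > 0"
  shows "G b - G a \<le> (B + e) * (b - a) + e"
proof -
  obtain \<delta> where \<delta>: "\<delta> > 0" and ac_small: "\<And>D D1. D tagged_division_of {a..b} \<Longrightarrow> D1 \<subseteq> D \<Longrightarrow>
      (\<Sum>(x,K)\<in>D1. measure lborel K) < \<delta> \<Longrightarrow> (\<Sum>(x,K)\<in>D1. G (Sup K) - G (Inf K)) < e"
    using abs_continuous_on_small_increment[OF ac e] by blast
  obtain \<gamma> where \<gamma>: "gauge \<gamma>" and N_small: "\<And>D. D tagged_division_of {a..b} \<Longrightarrow> \<gamma> fine D \<Longrightarrow>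
      (\<Sum>(x,K)\<in>{p\<in>D. fst p \<in> N}. measure lborel K) < \<delta>"
    using negligible_tags_small_content[OF N \<delta>] by blast
  obtain d where d: "\<And>x. d x > 0" and increment: "\<And>x u v. x \<notin> N \<Longrightarrow> u \<le> x \<Longrightarrow> x \<le> v \<Longrightarrow>
      {u..v} \<subseteq> ball x (d x) \<Longrightarrow> G v - G u \<le> (B + e) * (v - u)"
    using derivative_bound_gauge[OF der e] by blast
  have "gauge (\<lambda>x. \<gamma> x \<inter> ball x (d x))"
    using \<gamma> d by (intro gauge_Int gauge_ball_dependent) auto
  then obtain D where D: "D tagged_division_of {a..b}" and fine: "(\<lambda>x. \<gamma> x \<inter> ball x (d x)) fine D"
    using fine_division_exists_real by blast
  \<comment> \<open>Tags in \<open>N\<close> carry small total length, the others are controlled by the derivative.\<close>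
  define D1 where "D1 = {p\<in>D. fst p \<in> N}"
  have "G b - G a = (\<Sum>(x,K)\<in>D. G (Sup K) - G (Inf K))"
    using additive_tagged_division_1[OF ab D, of G] by simp
  also have "\<dots> = (\<Sum>(x,K)\<in>D - D1. G (Sup K) - G (Inf K)) + (\<Sum>(x,K)\<in>D1. G (Sup K) - G (Inf K))"
    using D by (intro sum.subset_diff) (auto simp: D1_def)
  finally have split: "G b - G a = \<dots>" .
  have "(\<Sum>(x,K)\<in>D1. G (Sup K) - G (Inf K)) < e"
  proof (rule ac_small[OF D])
    show "(\<Sum>(x,K)\<in>D1. measure lborel K) < \<delta>"
      unfolding D1_def using fine by (intro N_small[OF D]) (auto simp: fine_def)
  qed (auto simp: D1_def)
  moreover have "(\<Sum>(x,K)\<in>D - D1. G (Sup K) - G (Inf K)) \<le> (B + e) * (b - a)"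
  proof (rule tagged_division_increment_sum_le[OF D ab])
    fix x u v assume "(x, {u..v}) \<in> D - D1" "u \<le> x" "x \<le> v"
    moreover from this have "{u..v} \<subseteq> ball x (d x)" using fine by (auto simp: fine_def)
    ultimately show "G v - G u \<le> (B + e) * (v - u)" using increment by (auto simp: D1_def)
  qed (use B e in auto)
  ultimately show ?thesis using split by linarith
qed

lemma abs_continuous_increment_le:
  fixes G :: "real \<Rightarrow> real" and N :: "real set"
  assumes "abs_continuous_on a b G" and "negligible N"
    and "\<And>x. x \<notin> N \<Longrightarrow> \<exists>D. (G has_real_derivative D) (at x) \<and> D \<le> B"
    and "0 \<le> B" and ab: "a \<le> b"
  shows "G b - G a \<le> B * (b - a)"
proof (rule field_le_epsilon)
  fix e :: real assume e: "e > 0"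
  define e' where "e' = e / (b - a + 1)"
  have pos: "b - a + 1 > 0" using ab by simp
  then have "e' > 0" "e' * (b - a + 1) = e" using e by (simp_all add: e'_def)
  then have "G b - G a \<le> (B + e') * (b - a) + e'"
    by (intro abs_continuous_increment_le_approx[OF assms])
  also have "\<dots> = B * (b - a) + e' * (b - a + 1)"
    by (simp add: algebra_simps)
  finally show "G b - G a \<le> B * (b - a) + e"
    using \<open>e' * (b - a + 1) = e\<close> by simp
qed

lemma lipschitz_of_abs_continuous_deriv_bound:
  fixes G :: "real \<Rightarrow> real"
  assumes ac: "\<And>a b. abs_continuous_on a b G"
    and der: "AE x in lborel. \<exists>D. (G has_real_derivative D) (at x) \<and> \<bar>D\<bar> \<le> B"
  shows "\<bar>G y - G x\<bar> \<le> B * \<bar>y - x\<bar>"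
proof -
  have "AE x in lebesgue. \<exists>D. (G has_real_derivative D) (at x) \<and> \<bar>D\<bar> \<le> B"
    using der by (rule AE_completion)
  then obtain N where N: "negligible N"
    and good: "\<And>x. x \<notin> N \<Longrightarrow> \<exists>D. (G has_real_derivative D) (at x) \<and> \<bar>D\<bar> \<le> B"
    unfolding eventually_ae_filter_negligible by blast
  have "N \<noteq> UNIV" using N by auto
  then have B: "0 \<le> B" using good by force
  have upper: "G x - G w \<le> B * (x - w)" "- G x - - G w \<le> B * (x - w)" if "w \<le> x" for w x
  proof -
    show "G x - G w \<le> B * (x - w)"
      using good by (intro abs_continuous_increment_le[OF ac N _ B that]) (auto simp: abs_le_iff)
    have "\<exists>D. ((\<lambda>x. - G x) has_real_derivative D) (at x) \<and> D \<le> B" if "x \<notin> N" for x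
      using good[OF that] by (auto intro!: derivative_eq_intros simp: abs_le_iff)
    then show "- G x - - G w \<le> B * (x - w)"
      by (intro abs_continuous_increment_le[OF abs_continuous_on_uminus[OF ac] N _ B that])
  qed
  show ?thesis
    using upper[of x y] upper[of y x] by (cases "x \<le> y") (auto simp: abs_le_iff algebra_simps)
qed

section \<open>Polynomial interpolation\<close>

lemma Rolle_zeros_deriv:
  fixes \<phi> :: "real \<Rightarrow> real"
  assumes dif: "\<And>x. \<phi> differentiable (at x)"
  shows "finite S \<Longrightarrow> card S = Suc n \<Longrightarrow> \<forall>x\<in>S. \<phi> x = 0 \<Longrightarrow>
    \<exists>S'. finite S' \<and> card S' = n \<and> (\<forall>x\<in>S'. deriv \<phi> x = 0) \<and> (\<forall>z\<in>S'. Min S < z \<and> z < Max S)"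
proof (induction n arbitrary: S)
  case 0
  then show ?case by (intro exI[of _ "{}"]) auto
next
  case (Suc n)
  define a where "a = Max S"
  define S0 where "S0 = S - {a}"
  have aS: "a \<in> S" using Max_in Suc.prems(1,2) a_def by fastforce
  have S0: "finite S0" "card S0 = Suc n" using Suc.prems aS by (auto simp: S0_def)
  then have "S0 \<noteq> {}" by auto
  obtain S0' where S0': "finite S0'" "card S0' = n" "\<forall>x\<in>S0'. deriv \<phi> x = 0"
      "\<forall>z\<in>S0'. Min S0 < z \<and> z < Max S0"
    using Suc.IH[OF S0(1,2)] Suc.prems(3) by (auto simp: S0_def)
  define b where "b = Max S0"
  have bS0: "b \<in> S0" using Max_in[OF S0(1) \<open>S0 \<noteq> {}\<close>] by (simp add: b_def)
  have ba: "b < a" using bS0 Suc.prems(1) by (auto simp: S0_def a_def order_less_le)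
  have "\<phi> b = \<phi> a" using bS0 aS Suc.prems(3) by (auto simp: S0_def)
  moreover have "continuous_on {b..a} \<phi>"
    using dif by (meson continuous_at_imp_continuous_on differentiable_imp_continuous_within)
  ultimately obtain z where z: "b < z" "z < a" "DERIV \<phi> z :> 0" using Rolle[OF ba] dif by blast
  have "Min S \<le> Min S0" "Max S0 \<le> Max S"
    using S0 \<open>S0 \<noteq> {}\<close> Suc.prems(1) by (auto simp: S0_def intro: Min_antimono Max_mono)
  moreover have "Min S0 \<le> b" using Min_le[OF S0(1) bS0] .
  moreover have "z \<notin> S0'" using S0'(4) z by (auto simp: b_def)
  ultimately show ?case
    using S0' z DERIV_imp_deriv[OF z(3)]
    by (intro exI[of _ "insert z S0'"]) (force simp: a_def b_def)
qed

lemma Rolle_zeros_higher_deriv: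
  fixes \<phi> :: "real \<Rightarrow> real"
  assumes "\<And>k x. k < m \<Longrightarrow> (deriv ^^ k) \<phi> differentiable (at x)"
  shows "finite S \<Longrightarrow> card S = Suc (m + n) \<Longrightarrow> \<forall>x\<in>S. \<phi> x = 0 \<Longrightarrow>
    \<exists>S'. finite S' \<and> card S' = Suc n \<and> (\<forall>x\<in>S'. (deriv ^^ m) \<phi> x = 0)"
  using assms
proof (induction m arbitrary: n)
  case 0
  then show ?case by auto
next
  case (Suc m)
  obtain S' where "finite S'" "card S' = Suc (Suc n)" "\<forall>x\<in>S'. (deriv ^^ m) \<phi> x = 0"
    using Suc.IH[of "Suc n"] Suc.prems by auto
  with Rolle_zeros_deriv[of "(deriv ^^ m) \<phi>"] Suc.prems(4) show ?case by fastforce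
qed

lemma higher_deriv_diff_poly:
  fixes g :: "real \<Rightarrow> real"
  assumes "\<And>i x. i < k \<Longrightarrow> (deriv ^^ i) g differentiable (at x)"
  shows "(deriv ^^ k) (\<lambda>x. g x - poly p x) = (\<lambda>x. (deriv ^^ k) g x - poly ((pderiv ^^ k) p) x)"
  using assms
proof (induction k)
  case 0
  then show ?case by simp
next
  case (Suc k)
  have "DERIV (\<lambda>x. (deriv ^^ k) g x - poly ((pderiv ^^ k) p) x) x :>
      deriv ((deriv ^^ k) g) x - poly (pderiv ((pderiv ^^ k) p)) x" for x
    using Suc.prems[of k x] by (intro derivative_intros poly_DERIV) (auto simp: DERIV_deriv_iff_real_differentiable)
  with Suc show ?case by (auto simp: DERIV_imp_deriv)
qed

lemma poly_degree_le_1: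
  fixes p :: "'a::comm_semiring_1 poly"
  assumes "degree p \<le> 1"
  shows "poly p x = coeff p 0 + coeff p 1 * x"
  using poly_altdef[of p x] assms by (cases "degree p") (auto simp: coeff_eq_0)

lemma interpolating_poly_top_coeff_le:
  fixes g :: "real \<Rightarrow> real" and P :: "real poly"
  assumes diff: "\<And>i x. i < m \<Longrightarrow> (deriv ^^ i) g differentiable (at x)"
    and lip: "\<And>x y. \<bar>(deriv ^^ m) g y - (deriv ^^ m) g x\<bar> \<le> B * \<bar>y - x\<bar>"
    and deg: "degree P \<le> Suc m"
    and S: "finite S" "card S = Suc (Suc m)" "\<forall>x\<in>S. poly P x = g x"
  shows "fact (Suc m) * \<bar>coeff P (Suc m)\<bar> \<le> B"
proof -
  define \<phi> where "\<phi> = (\<lambda>x. g x - poly P x)"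
  define Q where "Q = (pderiv ^^ m) P"
  have d\<phi>: "(deriv ^^ k) \<phi> = (\<lambda>x. (deriv ^^ k) g x - poly ((pderiv ^^ k) P) x)" if "k \<le> m" for k
    unfolding \<phi>_def by (rule higher_deriv_diff_poly) (use diff that in auto)
  have "(deriv ^^ k) \<phi> differentiable (at x)" if "k < m" for k x
    unfolding d\<phi>[OF less_imp_le[OF that]] using diff[OF that]
    by (intro derivative_intros) (auto intro: poly_DERIV[THEN DERIV_imp_deriv] simp flip: real_differentiable_def)
  then obtain S' where S': "card S' = 2" "\<forall>x\<in>S'. (deriv ^^ m) \<phi> x = 0"
    using Rolle_zeros_higher_deriv[of m \<phi> S 1] S by (auto simp: \<phi>_def numeral_2_eq_2)
  then obtain a b where ab: "a \<noteq> b" "(deriv ^^ m) \<phi> a = 0" "(deriv ^^ m) \<phi> b = 0"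
    unfolding card_2_iff by auto
  have "degree Q \<le> 1" using deg by (simp add: Q_def degree_higher_pderiv)
  moreover have "coeff Q 1 = fact (Suc m) * coeff P (Suc m)"
    by (simp add: Q_def coeff_higher_pderiv pochhammer_fact pochhammer_rec)
  ultimately have "(deriv ^^ m) g b - (deriv ^^ m) g a = fact (Suc m) * coeff P (Suc m) * (b - a)"
    using ab(2,3) d\<phi>[of m] by (simp add: Q_def poly_degree_le_1 algebra_simps)
  then have "\<bar>fact (Suc m) * coeff P (Suc m) * (b - a)\<bar> \<le> B * \<bar>b - a\<bar>"
    using lip[where x = a and y = b] by metis
  then show ?thesis using ab(1) by (simp add: abs_mult)
qed

definition lagrange_poly :: "nat \<Rightarrow> (nat \<Rightarrow> real) \<Rightarrow> (nat \<Rightarrow> real) \<Rightarrow> real poly" where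
  "lagrange_poly m t v =
     (\<Sum>i\<le>m. smult (v i / (\<Prod>k\<in>{..m} - {i}. t i - t k)) (\<Prod>k\<in>{..m} - {i}. [:- t k, 1:]))"

lemma poly_lagrange_poly:
  "poly (lagrange_poly m t v) x = (\<Sum>i\<le>m. v i / (\<Prod>k\<in>{..m} - {i}. t i - t k) * (\<Prod>k\<in>{..m} - {i}. x - t k))"
  by (simp add: lagrange_poly_def poly_sum poly_prod)

lemma poly_lagrange_poly_node:
  assumes "inj_on t {..m}" and "j \<le> m"
  shows "poly (lagrange_poly m t v) (t j) = v j"
proof -
  have "v i / (\<Prod>k\<in>{..m} - {i}. t i - t k) * (\<Prod>k\<in>{..m} - {i}. t j - t k) = (if i = j then v j else 0)"
    if i: "i \<le> m" for i
  proof (cases "i = j")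
    case True
    have "(\<Prod>k\<in>{..m} - {i}. t i - t k) \<noteq> 0"
      using assms(1) i by (auto simp: inj_on_def)
    with True show ?thesis by simp
  next
    case False
    then have "(\<Prod>k\<in>{..m} - {i}. t j - t k) = 0"
      using assms(2) by (intro prod_zero) auto
    with False show ?thesis by simp
  qed
  then show ?thesis
    using assms(2) by (simp add: poly_lagrange_poly)
qed

lemma degree_lagrange_poly: "degree (lagrange_poly m t v) \<le> m"
  unfolding lagrange_poly_def
proof (rule degree_sum_le)
  fix i assume "i \<in> {..m}"
  then have "degree (\<Prod>k\<in>{..m} - {i}. [:- t k, 1:]) \<le> m"
    using degree_prod_sum_le[of "{..m} - {i}" "\<lambda>k. [:- t k, 1:]"] by simp
  then show "degree (smult (v i / (\<Prod>k\<in>{..m} - {i}. t i - t k)) (\<Prod>k\<in>{..m} - {i}. [:- t k, 1:])) \<le> m"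
    using degree_smult_le order_trans by blast
qed simp

lemma abs_poly_lagrange_poly_le:
  assumes h: "h > 0"
    and sep: "\<And>i k. i \<le> m \<Longrightarrow> k \<le> m \<Longrightarrow> i \<noteq> k \<Longrightarrow> h \<le> \<bar>t i - t k\<bar>"
    and rng: "\<And>i. i \<le> m \<Longrightarrow> \<bar>x - t i\<bar> \<le> L"
    and small: "\<And>i. i \<le> m \<Longrightarrow> \<bar>v i\<bar> \<le> \<epsilon>"
  shows "\<bar>poly (lagrange_poly m t v) x\<bar> \<le> real (Suc m) * \<epsilon> * (L / h) ^ m"
proof -
  have L: "L \<ge> 0" and \<epsilon>: "\<epsilon> \<ge> 0" using rng[of 0] small[of 0] by auto
  have "\<bar>v i / (\<Prod>k\<in>{..m} - {i}. t i - t k) * (\<Prod>k\<in>{..m} - {i}. x - t k)\<bar> \<le> \<epsilon> * (L / h) ^ m"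
    if i: "i \<le> m" for i
  proof -
    have card: "card ({..m} - {i}) = m" using i by simp
    have num: "(\<Prod>k\<in>{..m} - {i}. \<bar>x - t k\<bar>) \<le> L ^ m"
      using prod_mono[of "{..m} - {i}" "\<lambda>k. \<bar>x - t k\<bar>" "\<lambda>_. L"] rng card by auto
    have den: "h ^ m \<le> (\<Prod>k\<in>{..m} - {i}. \<bar>t i - t k\<bar>)"
      using prod_mono[of "{..m} - {i}" "\<lambda>_. h" "\<lambda>k. \<bar>t i - t k\<bar>"] sep[of i] i h card by auto
    have "\<bar>v i / (\<Prod>k\<in>{..m} - {i}. t i - t k) * (\<Prod>k\<in>{..m} - {i}. x - t k)\<bar>
        = \<bar>v i\<bar> * (\<Prod>k\<in>{..m} - {i}. \<bar>x - t k\<bar>) / (\<Prod>k\<in>{..m} - {i}. \<bar>t i - t k\<bar>)"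
      by (simp add: abs_mult abs_divide abs_prod)
    also have "\<dots> \<le> \<epsilon> * L ^ m / h ^ m"
      using small[OF i] num den h \<epsilon> L by (intro frac_le mult_mono) (auto intro: prod_nonneg)
    finally show ?thesis by (simp add: power_divide)
  qed
  then have "\<bar>poly (lagrange_poly m t v) x\<bar> \<le> (\<Sum>i\<le>m. \<epsilon> * (L / h) ^ m)"
    unfolding poly_lagrange_poly by (intro order_trans[OF sum_abs] sum_mono) auto
  then show ?thesis by simp
qed

lemma lagrange_interpolation_error:
  fixes g :: "real \<Rightarrow> real" and t :: "nat \<Rightarrow> real"
  assumes diff: "\<And>i x. i < m \<Longrightarrow> (deriv ^^ i) g differentiable (at x)"
    and lip: "\<And>x y. \<bar>(deriv ^^ m) g y - (deriv ^^ m) g x\<bar> \<le> B * \<bar>y - x\<bar>"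
    and inj: "inj_on t {..m}"
  shows "\<bar>g x - poly (lagrange_poly m t (g \<circ> t)) x\<bar> \<le> B * \<bar>\<Prod>k\<le>m. x - t k\<bar> / fact (Suc m)"
proof -
  define Lp where "Lp = lagrange_poly m t (g \<circ> t)"
  define w where "w = (\<Prod>k\<le>m. [:- t k, 1:])"
  have Lp_node: "poly Lp (t j) = g (t j)" if "j \<le> m" for j
    using poly_lagrange_poly_node[OF inj that] by (simp add: Lp_def)
  have poly_w: "poly w y = (\<Prod>k\<le>m. y - t k)" for y by (simp add: w_def poly_prod)
  show ?thesis
  proof (cases "x \<in> t ` {..m}")
    case True
    moreover have "B \<ge> 0" using lip[of 0 1] by simp
    ultimately show ?thesis using Lp_node by (auto simp: Lp_def)
  next
    case False
    \<comment> \<open>Add the multiple of \<open>w\<close> that makes the interpolant exact at \<open>x\<close> as well.\<close>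
    have "poly w x \<noteq> 0" using False by (auto simp: poly_w)
    define K where "K = (g x - poly Lp x) / poly w x"
    define P where "P = Lp + smult K w"
    have deg_w: "degree w = Suc m" unfolding w_def by (subst degree_prod_eq_sum_degree) auto
    have "degree P \<le> Suc m"
      unfolding P_def using degree_lagrange_poly[of m t] deg_w degree_smult_le[of K w]
      by (intro degree_add_le) (auto simp: Lp_def intro: le_SucI)
    moreover have "coeff P (Suc m) = K"
      using degree_lagrange_poly[of m t "g \<circ> t"] deg_w lead_coeff_prod[of "\<lambda>k. [:- t k, 1:]" "{..m}"]
      by (simp add: P_def Lp_def w_def coeff_eq_0)
    moreover have "\<forall>y\<in>insert x (t ` {..m}). poly P y = g y"
      using \<open>poly w x \<noteq> 0\<close> Lp_node by (auto simp: P_def K_def poly_w)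
    moreover have "card (insert x (t ` {..m})) = Suc (Suc m)"
      using False card_image[OF inj] by simp
    ultimately have "fact (Suc m) * \<bar>K\<bar> \<le> B"
      using interpolating_poly_top_coeff_le[OF diff lip] by (metis finite_imageI finite_atMost finite_insert)
    then have "\<bar>K\<bar> \<le> B / fact (Suc m)"
      by (metis fact_gt_zero mult.commute pos_le_divide_eq)
    then have "\<bar>K\<bar> * \<bar>poly w x\<bar> \<le> B / fact (Suc m) * \<bar>poly w x\<bar>"
      by (rule mult_right_mono) simp
    moreover have "g x - poly Lp x = K * poly w x"
      using \<open>poly w x \<noteq> 0\<close> by (simp add: K_def)
    ultimately show ?thesis
      by (simp add: Lp_def poly_w abs_mult)
  qed
qed

lemma interpolation_bound:
  fixes g :: "real \<Rightarrow> real" and t :: "nat \<Rightarrow> real"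
  assumes diff: "\<And>i x. i < m \<Longrightarrow> (deriv ^^ i) g differentiable (at x)"
    and lip: "\<And>x y. \<bar>(deriv ^^ m) g y - (deriv ^^ m) g x\<bar> \<le> B * \<bar>y - x\<bar>"
    and h: "h > 0"
    and sep: "\<And>i k. i \<le> m \<Longrightarrow> k \<le> m \<Longrightarrow> i \<noteq> k \<Longrightarrow> h \<le> \<bar>t i - t k\<bar>"
    and rng: "\<And>i. i \<le> m \<Longrightarrow> \<bar>x - t i\<bar> \<le> L"
    and small: "\<And>i. i \<le> m \<Longrightarrow> \<bar>g (t i)\<bar> \<le> \<epsilon>"
  shows "\<bar>g x\<bar> \<le> real (Suc m) * \<epsilon> * (L / h) ^ m + B * L ^ Suc m / fact (Suc m)"
proof -
  define Lp where "Lp = lagrange_poly m t (g \<circ> t)"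
  have inj: "inj_on t {..m}" using sep h by (force simp: inj_on_def)
  have "\<bar>poly Lp x\<bar> \<le> real (Suc m) * \<epsilon> * (L / h) ^ m"
    unfolding Lp_def using h sep rng small by (intro abs_poly_lagrange_poly_le) auto
  moreover have "\<bar>g x - poly Lp x\<bar> \<le> B * L ^ Suc m / fact (Suc m)"
  proof -
    have "\<bar>\<Prod>k\<le>m. x - t k\<bar> \<le> L ^ Suc m"
      using prod_mono[of "{..m}" "\<lambda>k. \<bar>x - t k\<bar>" "\<lambda>_. L"] rng by (simp add: abs_prod)
    moreover have "B \<ge> 0" using lip[of 0 1] by simp
    ultimately have "B * \<bar>\<Prod>k\<le>m. x - t k\<bar> / fact (Suc m) \<le> B * L ^ Suc m / fact (Suc m)"
      by (intro divide_right_mono mult_left_mono) auto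
    with lagrange_interpolation_error[OF diff lip inj, of x] show ?thesis by (simp add: Lp_def)
  qed
  ultimately show ?thesis by linarith
qed

section \<open>Samples on the grid\<close>

lemma xpt_eq: "xpt n j = - of_int j * hstep n"
  by (simp add: xpt_def hstep_def)

lemma mem_Ij_iff:
  "y \<in> Ij n j \<longleftrightarrow> - of_int j * hstep n \<le> y \<and> y \<le> - (of_int j - 1) * hstep n"
  by (simp add: Ij_def xpt_eq)

lemma xpt_diff: "xpt n p - xpt n q = of_int (q - p) * hstep n"
  by (simp add: xpt_eq algebra_simps)

lemma xpt_antimono:
  assumes "p \<le> q"
  shows "xpt n q \<le> xpt n p"
proof -
  have "0 \<le> of_int (q - p) * hstep n" using assms by (simp add: hstep_def)
  then show ?thesis using xpt_diff[of n p q] by linarith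
qed

lemma Ij_separated:
  assumes "a \<in> Ij n p" and "b \<in> Ij n q" and "p + 2 \<le> q"
  shows "hstep n \<le> a - b"
proof -
  have "hstep n \<ge> 0" by (simp add: hstep_def)
  then have "1 * hstep n \<le> of_int (q - 1 - p) * hstep n"
    using assms(3) by (intro mult_right_mono) auto
  then show ?thesis using assms(1,2) by (simp add: mem_Ij_iff algebra_simps)
qed

lemma higher_deriv_deriv: "(deriv ^^ k) (deriv f) = (deriv ^^ Suc k) f"
  by (simp add: funpow_Suc_right del: funpow.simps)

lemma W_deriv_higher_deriv_differentiable:
  assumes "W r f" and "k < r - 2"
  shows "(deriv ^^ k) (deriv f) differentiable (at x)"
proof -
  have "Suc k < r - 1" using assms(2) by simp
  then show ?thesis using assms(1) unfolding W_def higher_deriv_deriv by (simp del: funpow.simps)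
qed

lemma W_deriv_higher_deriv_lipschitz:
  assumes "W r f" and "r \<ge> 2"
  shows "\<bar>(deriv ^^ (r - 2)) (deriv f) y - (deriv ^^ (r - 2)) (deriv f) x\<bar> \<le> \<bar>y - x\<bar>"
proof -
  have "Suc (r - 2) = r - 1" using assms(2) by simp
  then show ?thesis
    using lipschitz_of_abs_continuous_deriv_bound[of "(deriv ^^ (r - 1)) f" 1] assms(1)
    by (simp add: W_def higher_deriv_deriv del: funpow.simps)
qed

lemma c1_expand:
  "c1 (m + 2) * h ^ Suc m
     = real (Suc m) * h ^ Suc m * real (2 * m + 1) ^ m + (real (2 * m + 1) * h) ^ Suc m / fact (Suc m)"
proof -
  have "c1 (m + 2) = real (2 * m + 1) ^ Suc m / fact (Suc m) + real (Suc m) * real (2 * m + 1) ^ m"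
    by (simp add: c1_def numeral_3_eq_3 algebra_simps)
  then show ?thesis
    by (simp only: power_mult_distrib) (simp add: field_simps)
qed

lemma alternate_Ij_points_separated:
  assumes t: "\<And>k. k \<le> m \<Longrightarrow> t k \<in> Ij n (j + 2 * int k)"
    and "i \<le> m" "k \<le> m" "i \<noteq> k"
  shows "hstep n \<le> \<bar>t i - t k\<bar>"
proof -
  have ordered: "hstep n \<le> t i - t k" if "i < k" "k \<le> m" for i k
    using t that by (intro Ij_separated[of _ n "j + 2 * int i" _ "j + 2 * int k"]) auto
  show ?thesis
  proof (cases "i < k")
    case True
    then show ?thesis using ordered[of i k] assms by simp
  next
    case False
    then show ?thesis using ordered[of k i] assms by simp
  qed
qed

lemma alternate_Ij_points_close:
  assumes t: "t \<in> Ij n (j + 2 * int k)" and "k \<le> m"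
    and x: "xpt n (j + 2 * int m) \<le> x" "x \<le> xpt n (j - 1)"
  shows "\<bar>x - t\<bar> \<le> real (2 * m + 1) * hstep n"
proof -
  have "xpt n (j + 2 * int m) \<le> t" "t \<le> xpt n (j - 1)"
    using assms xpt_antimono[of "j + 2 * int k" "j + 2 * int m" n]
      xpt_antimono[of "j - 1" "j + 2 * int k - 1" n] by (auto simp: Ij_def)
  moreover have "xpt n (j - 1) - xpt n (j + 2 * int m) = real (2 * m + 1) * hstep n"
    by (simp add: xpt_diff)
  ultimately show ?thesis using x by (simp add: abs_le_iff)
qed

lemma bound_from_small_samples:
  fixes g :: "real \<Rightarrow> real" and y :: "int \<Rightarrow> real"
  assumes r: "r \<ge> 2" and n: "n \<ge> 1"
    and diff: "\<And>i x. i < r - 2 \<Longrightarrow> (deriv ^^ i) g differentiable (at x)"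
    and lip: "\<And>x y. \<bar>(deriv ^^ (r - 2)) g y - (deriv ^^ (r - 2)) g x\<bar> \<le> \<bar>y - x\<bar>"
    and samples: "\<And>i. i \<in> {0 .. 2 * int r - 4} \<Longrightarrow> y i \<in> Ij n (j + i) \<and> \<bar>g (y i)\<bar> \<le> hstep n ^ (r - 1)"
    and x: "xpt n (j + 2 * int r - 4) \<le> x" "x \<le> xpt n (j - 1)"
  shows "\<bar>g x\<bar> \<le> c1 r * hstep n ^ (r - 1)"
proof -
  obtain m where m: "r = m + 2" using r by (metis add.commute le_Suc_ex)
  define h where "h = hstep n"
  have h: "h > 0" using n by (simp add: h_def hstep_def)
  define t where "t k = y (2 * int k)" for k
  have node: "t k \<in> Ij n (j + 2 * int k) \<and> \<bar>g (t k)\<bar> \<le> h ^ Suc m" if "k \<le> m" for k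
    using samples[of "2 * int k"] that m by (simp add: t_def h_def)
  have "\<And>i k. i \<le> m \<Longrightarrow> k \<le> m \<Longrightarrow> i \<noteq> k \<Longrightarrow> h \<le> \<bar>t i - t k\<bar>"
    unfolding h_def using node by (intro alternate_Ij_points_separated) auto
  moreover have "\<And>k. k \<le> m \<Longrightarrow> \<bar>x - t k\<bar> \<le> real (2 * m + 1) * h"
    unfolding h_def using node x m by (intro alternate_Ij_points_close) auto
  moreover have "\<And>i x. i < m \<Longrightarrow> (deriv ^^ i) g differentiable (at x)"
    and "\<And>x y. \<bar>(deriv ^^ m) g y - (deriv ^^ m) g x\<bar> \<le> 1 * \<bar>y - x\<bar>"
    using diff lip m by simp_all
  ultimately have "\<bar>g x\<bar> \<le> real (Suc m) * h ^ Suc m * (real (2 * m + 1) * h / h) ^ m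
      + 1 * (real (2 * m + 1) * h) ^ Suc m / fact (Suc m)"
    using node h by (intro interpolation_bound) auto
  also have "\<dots> = real (Suc m) * h ^ Suc m * real (2 * m + 1) ^ m
      + (real (2 * m + 1) * h) ^ Suc m / fact (Suc m)"
    using h by simp
  also have "\<dots> = c1 r * h ^ (r - 1)"
    unfolding c1_expand[symmetric] m by simp
  finally show ?thesis by (simp add: h_def)
qed

theorem lemma2:
  fixes r n :: nat and f :: "real \<Rightarrow> real"
  assumes "r \<ge> 2" and "n \<ge> 1" and "W r f"
  shows "\<not> (\<exists>j::int. \<forall>i::int \<in> {0 .. 2 * int r - 4}. third_type r n f (j + i))"
proof
  assume "\<exists>j::int. \<forall>i::int \<in> {0 .. 2 * int r - 4}. third_type r n f (j + i)"
  then obtain j where third: "\<And>i. i \<in> {0 .. 2 * int r - 4} \<Longrightarrow> third_type r n f (j + i)" by blast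
  have "\<forall>i\<in>{0 .. 2 * int r - 4}. \<exists>y. y \<in> Ij n (j + i) \<and> \<bar>deriv f y\<bar> \<le> hstep n ^ (r - 1)"
    using third unfolding third_type_def second_type_def by (force simp: not_le)
  then obtain y where samples: "\<And>i. i \<in> {0 .. 2 * int r - 4} \<Longrightarrow>
      y i \<in> Ij n (j + i) \<and> \<bar>deriv f (y i)\<bar> \<le> hstep n ^ (r - 1)"
    by metis
  obtain x where x: "x \<in> Ij n j" and large: "\<bar>deriv f x\<bar> > c1 r * hstep n ^ (r - 1)"
    using third[of 0] assms(1) unfolding third_type_def first_type_def by (auto simp: not_le)
  have "\<bar>deriv f x\<bar> \<le> c1 r * hstep n ^ (r - 1)"
  proof (rule bound_from_small_samples[OF assms(1,2) _ _ samples])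
    show "(deriv ^^ i) (deriv f) differentiable (at z)" if "i < r - 2" for i z
      using W_deriv_higher_deriv_differentiable[OF assms(3) that] .
    show "\<bar>(deriv ^^ (r - 2)) (deriv f) b - (deriv ^^ (r - 2)) (deriv f) a\<bar> \<le> \<bar>b - a\<bar>" for a b
      using W_deriv_higher_deriv_lipschitz[OF assms(3,1)] .
    show "xpt n (j + 2 * int r - 4) \<le> x" "x \<le> xpt n (j - 1)"
      using x xpt_antimono[of j "j + 2 * int r - 4" n] assms(1) by (auto simp: Ij_def)
  qed
  with large show False by simp
qed

end
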